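(* Let $S$ be a regular ordered semigroup and $\mathcal{B}(S)$ its semigroup of bi-ideals. Let $\mathscr{L}_{\mathcal{B}(S)}$ be the Green's $\mathscr{L}$-relation of the semigroup $(\mathcal{B}(S),* )$ and let $\mathscr{L}'$ be the relation on $\mathcal{B}(S)$ given by: $A\,\mathscr{L}'\,B$ iff for each $a\in A$ there is $b\in B$ with $a\,\mathscr{L}_S\,b$ and for each $b\in B$ there is $a\in A$ with $a\,\mathscr{L}_S\,b$. Then $\mathscr{L}_{\mathcal{B}(S)}\subseteq\mathscr{L}'$.
   Context: An ordered semigroup $(S,\cdot,\leq)$ is a semigroup with a compatible partial order. For $A\subseteq S$, $(A]=\{x\in S: x\leq a\text{ for some }a\in A\}$. $S$ is regular if for each $a\in S$ there is $x\in S$ with $a\leq axa$. A nonempty $A\subseteq S$ is a bi-ideal if $ASA\subseteq A$ and $(A]=A$; $\mathcal{B}(S)$ is the set of bi-ideals with operation $A*B=(AB]$. $\mathscr{L}_S$ is the Green's relation on the ordered semigroup $S$: $a\,\mathscr{L}_S\,b$ iff $(a\cup Sa]=(b\cup Sb]$. $\mathscr{L}_{\mathcal{B}(S)}$ is the usual Green's $\mathscr{L}$-relation of the (unordered) semigroup $(\mathcal{B}(S),* )$. *)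

theory Defs
  imports Main
begin

definition ordered_semigroup :: "('a::{semigroup_mult,order}) itself \<Rightarrow> bool" where
  "ordered_semigroup _ \<longleftrightarrow> (\<forall>a b c::'a. a \<le> b \<longrightarrow> a * c \<le> b * c \<and> c * a \<le> c * b)"

definition down :: "('a::order) set \<Rightarrow> 'a set" where
  "down A = {x. \<exists>a\<in>A. x \<le> a}"

definition setmult :: "('a::times) set \<Rightarrow> 'a set \<Rightarrow> 'a set" where
  "setmult A B = {a * b | a b. a \<in> A \<and> b \<in> B}"

definition regular_os :: "('a::{semigroup_mult,order}) itself \<Rightarrow> bool" where
  "regular_os _ \<longleftrightarrow> (\<forall>a::'a. \<exists>x. a \<le> a * x * a)"

definition bi_ideal :: "('a::{semigroup_mult,order}) set \<Rightarrow> bool" where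
  "bi_ideal A \<longleftrightarrow> A \<noteq> {} \<and> setmult (setmult A UNIV) A \<subseteq> A \<and> down A = A"

definition bi_ideals :: "('a::{semigroup_mult,order}) set set" where
  "bi_ideals = {A. bi_ideal A}"

definition bmult :: "('a::{semigroup_mult,order}) set \<Rightarrow> 'a set \<Rightarrow> 'a set" where
  "bmult A B = down (setmult A B)"

definition greenL_S :: "('a::{semigroup_mult,order}) \<Rightarrow> 'a \<Rightarrow> bool" where
  "greenL_S a b \<longleftrightarrow> down ({a} \<union> setmult UNIV {a}) = down ({b} \<union> setmult UNIV {b})"

text \<open>Usual Green's L on the (unordered) semigroup (B(S), *): B(S)^1 A = B(S)^1 B.\<close>
definition greenL_B :: "('a::{semigroup_mult,order}) set \<Rightarrow> 'a set \<Rightarrow> bool" where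
  "greenL_B A B \<longleftrightarrow>
     insert A {bmult C A | C. C \<in> bi_ideals} = insert B {bmult C B | C. C \<in> bi_ideals}"

definition L_prime :: "('a::{semigroup_mult,order}) set \<Rightarrow> 'a set \<Rightarrow> bool" where
  "L_prime A B \<longleftrightarrow> (\<forall>a\<in>A. \<exists>b\<in>B. greenL_S a b) \<and> (\<forall>b\<in>B. \<exists>a\<in>A. greenL_S a b)"

end

theory Submission
  imports Defs
begin

text \<open>If \<open>A \<noteq> B\<close> are \<open>\<L>\<close>-related in \<open>\<B>(S)\<close>, then \<open>A = (C B]\<close> and \<open>B = (D A]\<close>.
  For \<open>a \<in> A\<close> this gives \<open>a \<le> c d a\<^sub>1\<close> with \<open>a\<^sub>1 \<in> A\<close>, and regularity \<open>a \<le> a x a\<close> yields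
  \<open>a \<le> c b\<close> for \<open>b = d (a\<^sub>1 x a) \<in> B\<close>; since \<open>b\<close> is itself a left multiple of \<open>a\<close>,
  \<open>a\<close> and \<open>b\<close> generate the same principal left ideal.\<close>

lemma ordered_semigroupD:
  fixes a b c :: "'a::{semigroup_mult,order}"
  assumes "ordered_semigroup TYPE('a)" and "a \<le> b"
  shows "a * c \<le> b * c" and "c * a \<le> c * b"
  using assms unfolding ordered_semigroup_def by blast+

lemma mem_bmult_iff: "x \<in> bmult C B \<longleftrightarrow> (\<exists>c\<in>C. \<exists>b\<in>B. x \<le> c * b)"
  unfolding bmult_def down_def setmult_def by blast

lemma bi_ideal_mult_mem:
  assumes "bi_ideal A" and "a \<in> A" and "a' \<in> A"
  shows "a * x * a' \<in> A"
  using assms unfolding bi_ideal_def setmult_def by blast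

lemma mem_principal_left_ideal_iff:
  "z \<in> down ({a} \<union> setmult UNIV {a}) \<longleftrightarrow> z \<le> a \<or> (\<exists>s. z \<le> s * a)"
  unfolding down_def setmult_def by blast

lemma principal_left_ideal_mono:
  fixes a b s :: "'a::{semigroup_mult,order}"
  assumes os: "ordered_semigroup TYPE('a)" and "a \<le> s * b"
  shows "down ({a} \<union> setmult UNIV {a}) \<subseteq> down ({b} \<union> setmult UNIV {b})"
proof
  fix z assume "z \<in> down ({a} \<union> setmult UNIV {a})"
  then consider "z \<le> a" | u where "z \<le> u * a"
    unfolding mem_principal_left_ideal_iff by blast
  then have "\<exists>t. z \<le> t * b"
  proof cases
    case 1
    then show ?thesis using \<open>a \<le> s * b\<close> by (blast intro: order_trans)
  next
    case (2 u)
    have "u * a \<le> (u * s) * b"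
      using ordered_semigroupD(2)[OF os \<open>a \<le> s * b\<close>] by (simp add: mult.assoc)
    with 2 show ?thesis by (blast intro: order_trans)
  qed
  then show "z \<in> down ({b} \<union> setmult UNIV {b})"
    unfolding mem_principal_left_ideal_iff by blast
qed

lemma greenL_S_refl: "greenL_S a a"
  unfolding greenL_S_def ..

lemma greenL_S_sym: "greenL_S a b \<Longrightarrow> greenL_S b a"
  unfolding greenL_S_def by (rule sym)

lemma greenL_S_if_left_multiples:
  fixes a b :: "'a::{semigroup_mult,order}"
  assumes "ordered_semigroup TYPE('a)" and "a \<le> s * b" and "b \<le> t * a"
  shows "greenL_S a b"
  unfolding greenL_S_def
  using principal_left_ideal_mono[OF assms(1,2)] principal_left_ideal_mono[OF assms(1,3)]
  by (rule subset_antisym)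

lemma greenL_B_imp_left_multiples:
  assumes "greenL_B A B" and "A \<noteq> B"
  shows "\<exists>C. A = bmult C B" and "\<exists>D. B = bmult D A"
proof -
  let ?LA = "insert A {bmult C A | C. C \<in> bi_ideals}"
  let ?LB = "insert B {bmult C B | C. C \<in> bi_ideals}"
  have eq: "?LA = ?LB" using assms(1) unfolding greenL_B_def .
  have "A \<in> ?LB" by (subst eq[symmetric]) (rule insertI1)
  with assms(2) show "\<exists>C. A = bmult C B" by blast
  have "B \<in> ?LA" by (subst eq) (rule insertI1)
  with assms(2) show "\<exists>D. B = bmult D A" by blast
qed

lemma greenL_S_partner_in_mutual_multiple:
  fixes A B C D :: "('a::{semigroup_mult,order}) set"
  assumes os: "ordered_semigroup TYPE('a)" and reg: "regular_os TYPE('a)"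
    and "bi_ideal A" and "A \<subseteq> bmult C B" and B: "B = bmult D A"
    and "a \<in> A"
  shows "\<exists>b\<in>B. greenL_S a b"
proof -
  obtain x where x: "a \<le> a * x * a" using reg unfolding regular_os_def by blast
  obtain c b1 where "b1 \<in> B" and ab1: "a \<le> c * b1"
    using \<open>a \<in> A\<close> \<open>A \<subseteq> bmult C B\<close> mem_bmult_iff by blast
  then obtain d a1 where "d \<in> D" "a1 \<in> A" and b1: "b1 \<le> d * a1"
    using B mem_bmult_iff by blast
  define b where "b = d * (a1 * x * a)"
  have "b \<in> B"
    unfolding B mem_bmult_iff b_def
    using \<open>d \<in> D\<close> bi_ideal_mult_mem[OF \<open>bi_ideal A\<close> \<open>a1 \<in> A\<close> \<open>a \<in> A\<close>] by blast
  have "a \<le> c * (d * a1)"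
    using ab1 ordered_semigroupD(2)[OF os b1] by (rule order_trans)
  then have "a * x * a \<le> c * (d * a1) * (x * a)"
    using ordered_semigroupD(1)[OF os] by (metis mult.assoc)
  then have "a \<le> c * b"
    using x unfolding b_def by (simp add: mult.assoc)
  moreover have "b \<le> (d * a1 * x) * a"
    unfolding b_def by (simp add: mult.assoc)
  ultimately have "greenL_S a b"
    by (rule greenL_S_if_left_multiples[OF os])
  with \<open>b \<in> B\<close> show ?thesis by blast
qed

theorem mainTheorem3:
  fixes A B :: "('a::{semigroup_mult,order}) set"
  assumes "ordered_semigroup TYPE('a)"
    and "regular_os TYPE('a)"
    and "A \<in> bi_ideals" and "B \<in> bi_ideals"
    and "greenL_B A B"
  shows "L_prime A B"
proof (cases "A = B")
  case True
  then show ?thesis unfolding L_prime_def using greenL_S_refl by blast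
next
  case False
  obtain C D where AC: "A = bmult C B" and BD: "B = bmult D A"
    using greenL_B_imp_left_multiples[OF assms(5) False] by blast
  have "bi_ideal A" and "bi_ideal B"
    using assms(3,4) unfolding bi_ideals_def by simp_all
  have "\<forall>a\<in>A. \<exists>b\<in>B. greenL_S a b"
    using greenL_S_partner_in_mutual_multiple[OF assms(1,2) \<open>bi_ideal A\<close> _ BD] AC by blast
  moreover have "\<forall>b\<in>B. \<exists>a\<in>A. greenL_S b a"
    using greenL_S_partner_in_mutual_multiple[OF assms(1,2) \<open>bi_ideal B\<close> _ AC] BD by blast
  ultimately show ?thesis
    unfolding L_prime_def using greenL_S_sym by blast
qed

end
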